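(* If $D$ is an API-domain and $P$ is a prime ideal of $D$, then $D/P$ is an API-domain; if moreover $D$ is quasilocal, then $D/P$ is a quasilocal API-domain.
   Context: An API-domain is an integral domain in which for every nonempty subset $\{d_\alpha\}$ of nonzero elements there is a natural number $n$ with the ideal generated by $\{d_\alpha^n\}$ principal. Quasilocal: unique maximal ideal. *)

theory Defs
  imports "HOL-Algebra.Algebra"
begin

definition API_domain :: "('a, 'b) ring_scheme \<Rightarrow> bool" where
  "API_domain R \<longleftrightarrow> domain R \<and>
     (\<forall>S. S \<noteq> {} \<and> S \<subseteq> carrier R - {\<zero>\<^bsub>R\<^esub>} \<longrightarrow>
        (\<exists>n::nat. n \<ge> 1 \<and>
           principalideal (Idl\<^bsub>R\<^esub> ((\<lambda>d. d [^]\<^bsub>R\<^esub> n) ` S)) R))"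

definition quasilocal :: "('a, 'b) ring_scheme \<Rightarrow> bool" where
  "quasilocal R \<longleftrightarrow> (\<exists>!M. maximalideal M R)"

end

theory Submission
  imports Defs
begin

(* Both properties pass to every surjective ring homomorphism h from R onto S, in particular
   to the canonical projection onto D/P.  A set of nonzero elements of S is the image of its full
   preimage T, which consists of nonzero elements of R; if the n-th powers of T generate the
   principal ideal (g), then, since a surjection maps generated ideals onto the ideals generated
   by the images, the n-th powers in S generate (h g).  For quasilocality, the preimage of a
   maximal ideal of S is maximal in R and determines the ideal, so two maximal ideals of S have
   the same preimage and coincide. *)

lemma (in ring) exists_maximalideal_superset:
  assumes "ideal I R" and "\<one> \<notin> I"
  shows "\<exists>M. maximalideal M R \<and> I \<subseteq> M"
proof -
  define \<A> where "\<A> = {J. ideal J R \<and> I \<subseteq> J \<and> \<one> \<notin> J}"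
  have "\<exists>M\<in>\<A>. \<forall>J\<in>\<A>. M \<subseteq> J \<longrightarrow> J = M"
  proof (rule subset_Zorn_nonempty)
    show "\<A> \<noteq> {}"
      using assms unfolding \<A>_def by blast
  next
    fix C assume C: "C \<noteq> {}" "subset.chain \<A> C"
    have "subset.chain {J. ideal J R} C"
      using C(2) unfolding \<A>_def pred_on.chain_def by blast
    then have "ideal (\<Union>C) R"
      using chain_Union_is_ideal[of C] C(1) by simp
    then show "\<Union>C \<in> \<A>"
      using C unfolding \<A>_def pred_on.chain_def by blast
  qed
  then obtain M where M: "M \<in> \<A>" and M_max: "\<And>J. J \<in> \<A> \<Longrightarrow> M \<subseteq> J \<Longrightarrow> J = M"
    by blast
  have "maximalideal M R"
  proof (rule maximalidealI)
    show "ideal M R" and "carrier R \<noteq> M"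
      using M unfolding \<A>_def by auto
  next
    fix J assume J: "ideal J R" "M \<subseteq> J" "J \<subseteq> carrier R"
    show "J = M \<or> J = carrier R"
      using M M_max[of J] J ideal.one_imp_carrier[OF J(1)] unfolding \<A>_def by blast
  qed
  then show ?thesis
    using M unfolding \<A>_def by blast
qed

context ring_hom_ring
begin

lemma ideal_image_surj:
  assumes surj: "h ` carrier R = carrier S" and I: "ideal I R"
  shows "ideal (h ` I) S"
proof (rule idealI)
  show "ring S" ..
  show "subgroup (h ` I) (add_monoid S)"
    using img_is_add_subgroup[OF additive_subgroup.a_subgroup[OF ideal.axioms(1)[OF I]]] .
next
  fix a x assume "a \<in> h ` I" "x \<in> carrier S"
  then obtain i r where "i \<in> I" "a = h i" "r \<in> carrier R" "x = h r"
    using surj by blast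
  moreover have "i \<in> carrier R"
    using \<open>i \<in> I\<close> ideal.Icarr[OF I] by blast
  ultimately show "x \<otimes>\<^bsub>S\<^esub> a \<in> h ` I" and "a \<otimes>\<^bsub>S\<^esub> x \<in> h ` I"
    using ideal.I_l_closed[OF I] ideal.I_r_closed[OF I] by (auto simp flip: hom_mult)
qed

lemma genideal_image_surj:
  assumes surj: "h ` carrier R = carrier S" and A: "A \<subseteq> carrier R"
  shows "Idl\<^bsub>S\<^esub> (h ` A) = h ` (Idl A)"
proof
  show "Idl\<^bsub>S\<^esub> (h ` A) \<subseteq> h ` (Idl A)"
    using S.genideal_minimal[OF ideal_image_surj[OF surj R.genideal_ideal[OF A]]]
      R.genideal_self[OF A] by blast
next
  have hA: "h ` A \<subseteq> carrier S"
    using A by auto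
  have "Idl A \<subseteq> {r \<in> carrier R. h r \<in> Idl\<^bsub>S\<^esub> (h ` A)}"
    by (rule R.genideal_minimal[OF ideal_vimage[OF S.genideal_ideal[OF hA]]])
      (use A S.genideal_self[OF hA] in auto)
  then show "h ` (Idl A) \<subseteq> Idl\<^bsub>S\<^esub> (h ` A)"
    by blast
qed

lemma maximalideal_vimage_surj:
  assumes surj: "h ` carrier R = carrier S" and "maximalideal M S"
  shows "maximalideal {r \<in> carrier R. h r \<in> M} R"
    (is "maximalideal ?M' R")
proof -
  interpret M: maximalideal M S by fact
  show ?thesis
  proof (rule maximalidealI)
    show "ideal ?M' R"
      using ideal_vimage[OF M.is_ideal] .
    have "\<one>\<^bsub>S\<^esub> \<notin> M"
      using M.I_notcarr M.one_imp_carrier by blast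
    then show "carrier R \<noteq> ?M'"
      by force
  next
    fix J assume J: "ideal J R" "?M' \<subseteq> J" "J \<subseteq> carrier R"
    interpret J: ideal J R by fact
    have "M \<subseteq> h ` J"
    proof
      fix m assume "m \<in> M"
      then obtain r where "r \<in> carrier R" "m = h r"
        using surj M.Icarr by (metis imageE)
      then show "m \<in> h ` J"
        using \<open>m \<in> M\<close> J(2) by blast
    qed
    moreover have "h ` J \<subseteq> carrier S"
      using J(3) by auto
    ultimately consider "h ` J = M" | "h ` J = carrier S"
      using M.I_maximal[OF ideal_image_surj[OF surj J(1)]] by blast
    then show "J = ?M' \<or> J = carrier R"
    proof cases
      case 1
      then show ?thesis
        using J by blast
    next
      case 2
      then obtain j where j: "j \<in> J" "h j = \<one>\<^bsub>S\<^esub>"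
        by (metis S.one_closed imageE)
      have "j \<in> carrier R"
        using j(1) J(3) by blast
      \<comment> \<open>\<open>\<one> \<ominus> j\<close> lies in the kernel, hence in the preimage of \<open>M\<close>, hence in \<open>J\<close>.\<close>
      have "\<one> \<ominus> j \<in> ?M'"
        using \<open>j \<in> carrier R\<close> j(2) M.zero_closed by (simp add: a_minus_def S.r_neg)
      then have "(\<one> \<ominus> j) \<oplus> j \<in> J"
        using J(2) j(1) J.a_closed by blast
      then have "\<one> \<in> J"
        using \<open>j \<in> carrier R\<close> by (simp add: a_minus_def R.add.m_assoc R.l_neg)
      then show ?thesis
        using J.one_imp_carrier by blast
    qed
  qed
qed

end

lemma API_domainD:
  assumes "API_domain R" and "A \<noteq> {}" and "A \<subseteq> carrier R - {\<zero>\<^bsub>R\<^esub>}"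
  obtains n :: nat where "n \<ge> 1" and "principalideal (Idl\<^bsub>R\<^esub> ((\<lambda>d. d [^]\<^bsub>R\<^esub> n) ` A)) R"
  using assms unfolding API_domain_def by blast

lemma API_domain_surj_image:
  assumes "API_domain R" and "domain S" and "ring_hom_ring R S h"
    and surj: "h ` carrier R = carrier S"
  shows "API_domain S"
  unfolding API_domain_def
proof (intro conjI allI impI)
  show "domain S" by fact
  interpret h: ring_hom_ring R S h by fact
  fix B assume B: "B \<noteq> {} \<and> B \<subseteq> carrier S - {\<zero>\<^bsub>S\<^esub>}"
  define T where "T = {r \<in> carrier R. h r \<in> B}"
  have hT: "h ` T = B"
  proof
    show "h ` T \<subseteq> B"
      unfolding T_def by blast
    show "B \<subseteq> h ` T"
    proof
      fix b assume "b \<in> B"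
      then have "b \<in> h ` carrier R"
        using B surj by blast
      then show "b \<in> h ` T"
        using \<open>b \<in> B\<close> unfolding T_def by blast
    qed
  qed
  have "T \<noteq> {}" and T: "T \<subseteq> carrier R - {\<zero>\<^bsub>R\<^esub>}"
    using B hT unfolding T_def by auto
  then obtain n :: nat where "n \<ge> 1"
    and "principalideal (Idl\<^bsub>R\<^esub> ((\<lambda>d. d [^]\<^bsub>R\<^esub> n) ` T)) R"
    using API_domainD[OF assms(1)] by blast
  then obtain g where g: "g \<in> carrier R" "Idl\<^bsub>R\<^esub> ((\<lambda>d. d [^]\<^bsub>R\<^esub> n) ` T) = Idl\<^bsub>R\<^esub> {g}"
    using principalideal.generate by blast
  have pow_T: "(\<lambda>d. d [^]\<^bsub>R\<^esub> n) ` T \<subseteq> carrier R"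
    using T by auto
  have "(\<lambda>d. d [^]\<^bsub>S\<^esub> n) ` B = h ` (\<lambda>d. d [^]\<^bsub>R\<^esub> n) ` T"
    unfolding hT[symmetric] image_image
  proof (rule image_cong[OF refl])
    fix t assume "t \<in> T"
    then show "h t [^]\<^bsub>S\<^esub> n = h (t [^]\<^bsub>R\<^esub> n)"
      using T h.hom_nat_pow by auto
  qed
  then have "Idl\<^bsub>S\<^esub> ((\<lambda>d. d [^]\<^bsub>S\<^esub> n) ` B) = h ` (Idl\<^bsub>R\<^esub> {g})"
    using h.genideal_image_surj[OF surj pow_T] g(2) by simp
  also have "\<dots> = Idl\<^bsub>S\<^esub> {h g}"
    using h.genideal_image_surj[OF surj, of "{g}"] g(1) by simp
  finally have gen: "Idl\<^bsub>S\<^esub> ((\<lambda>d. d [^]\<^bsub>S\<^esub> n) ` B) = Idl\<^bsub>S\<^esub> {h g}" .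
  have pow_B: "(\<lambda>d. d [^]\<^bsub>S\<^esub> n) ` B \<subseteq> carrier S"
    using B by auto
  have "principalideal (Idl\<^bsub>S\<^esub> ((\<lambda>d. d [^]\<^bsub>S\<^esub> n) ` B)) S"
    by (rule principalidealI[OF h.S.genideal_ideal[OF pow_B]]) (use gen g(1) in auto)
  then show "\<exists>n::nat. n \<ge> 1 \<and> principalideal (Idl\<^bsub>S\<^esub> ((\<lambda>d. d [^]\<^bsub>S\<^esub> n) ` B)) S"
    using \<open>n \<ge> 1\<close> by blast
qed

lemma quasilocal_surj_image:
  assumes "quasilocal R" and "ring_hom_ring R S h"
    and surj: "h ` carrier R = carrier S" and nontrivial: "\<one>\<^bsub>S\<^esub> \<noteq> \<zero>\<^bsub>S\<^esub>"
  shows "quasilocal S"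
proof -
  interpret h: ring_hom_ring R S h by fact
  obtain M where M: "maximalideal M S"
    using h.S.exists_maximalideal_superset[OF h.S.zeroideal] nontrivial by auto
  have "M' = M" if M': "maximalideal M' S" for M'
  proof -
    have "{r \<in> carrier R. h r \<in> M'} = {r \<in> carrier R. h r \<in> M}"
      using assms(1) h.maximalideal_vimage_surj[OF surj] M M' unfolding quasilocal_def by blast
    moreover have "h ` {r \<in> carrier R. h r \<in> I} = I" if "I \<subseteq> carrier S" for I
      using surj that by auto
    ultimately show ?thesis
      using M M' maximalideal.axioms(1) ideal.Icarr by (metis subsetI)
  qed
  then show ?thesis
    unfolding quasilocal_def using M by blast
qed

lemma (in ideal) rcos_surj: "(+>\<^bsub>R\<^esub>) I ` carrier R = carrier (R Quot I)"
  unfolding FactRing_def A_RCOSETS_def' by auto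

theorem theorem4:
  fixes D :: "('a, 'b) ring_scheme" and P :: "'a set"
  assumes "API_domain D" and "primeideal P D"
  shows "API_domain (D Quot P) \<and> (quasilocal D \<longrightarrow> quasilocal (D Quot P))"
proof -
  have P: "ideal P D"
    using assms(2) by (rule primeideal.axioms(1))
  have quot_domain: "domain (D Quot P)"
    using assms(2) by (rule primeideal.quotient_is_domain)
  note proj = ideal.rcos_ring_hom_ring[OF P] ideal.rcos_surj[OF P]
  show ?thesis
    using API_domain_surj_image[OF assms(1) quot_domain proj]
      quasilocal_surj_image[OF _ proj domain.one_not_zero[OF quot_domain]]
    by blast
qed

end
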